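(* Let $\mathcal{A}$ be a finite set of hyperplanes through $0$ in a complex vector space $V_{\mathbb{C}}$, let $H\in\mathcal{A}$, and let $\sigma$ be an ordering of $\mathcal{A}$ compatible with $H$. Then for every $k\ge 1$, $$\mathrm{BCB}^k_\sigma(\mathcal{A})=\mathrm{BCB}^k_{\sigma\setminus H}(\mathcal{A}\setminus\{H\})\ \cup\ \big\{(l_\sigma(K_1),\dots,l_\sigma(K_{k-1}),H)\ :\ (K_1,\dots,K_{k-1})\in \mathrm{BCB}^{k-1}_{\sigma|H}(\mathcal{A}|H)\big\}.$$
   Context: For an arrangement $\mathcal{B}$ (finite set of hyperplanes through $0$ in a vector space), a set of its hyperplanes is independent if their defining linear forms (on the ambient space of $\mathcal{B}$) are linearly independent; $\mathrm{Or}^k(\mathcal{B})$ is the set of ordered independent $k$-tuples of elements of $\mathcal{B}$; an ordering is a bijection $\tau:\mathcal{B}\to\{1,\dots,|\mathcal{B}|\}$; and $\mathrm{BCB}^k_\tau(\mathcal{B})$ is the set of $S=(H_1,\dots,H_k)\in\mathrm{Or}^k(\mathcal{B})$ with $\tau(H_1)<\dots<\tau(H_k)$ such that for every $G\in\mathcal{B}$ not among the $H_i$, the set $\{G\}\cup\{H_i:\tau(H_i)>\tau(G)\}$ is independent. By convention $\mathrm{BCB}^0$ consists of the empty tuple. Given $H\in\mathcal{A}$: $\mathcal{A}\setminus\{H\}$ is the deleted arrangement in $V_{\mathbb{C}}$; $\mathcal{A}|H=\{H'\cap H: H'\in\mathcal{A}\setminus\{H\}\}$ is the arrangement of hyperplanes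 in $H$ (as a set of distinct subspaces); $\pi:\mathcal{A}\setminus\{H\}\to\mathcal{A}|H$, $H'\mapsto H'\cap H$. An ordering $\sigma$ of $\mathcal{A}$ is compatible with $H$ if (1) $\sigma(H)=|\mathcal{A}|$ and (2) whenever $H_1\cap H=H_3\cap H$ and $\sigma(H_1)<\sigma(H_2)<\sigma(H_3)$, then $H_1\cap H=H_2\cap H$. Then $\sigma\setminus H$ is the restriction of the order $\sigma$ to $\mathcal{A}\setminus\{H\}$, $\sigma|H$ is the induced ordering of $\mathcal{A}|H$ (well defined because by (2) each fiber of $\pi$ is an interval for $\sigma$; $K<K'$ iff the fiber over $K$ precedes the fiber over $K'$), and $l_\sigma:\mathcal{A}|H\to\mathcal{A}\setminus\{H\}$ sends $K$ to the element $H''$ with $\pi(H'')=K$ having the least $\sigma$-value. *)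

theory Defs
  imports "HOL-Analysis.Analysis"
begin

text \<open>A linear form on V
is given by its coefficient vector c, acting as x \<mapsto> sum_i c_i x_i; every linear
form on a subspace W extends to V, so linear forms on W are restrictions of these.\<close>

definition lform :: "complex^'n \<Rightarrow> complex^'n \<Rightarrow> complex" where
  "lform c x = (\<Sum>i\<in>UNIV. c $ i * x $ i)"

definition defining_form :: "(complex^'n) set \<Rightarrow> complex^'n \<Rightarrow> (complex^'n) set \<Rightarrow> bool" where
  "defining_form W c K \<longleftrightarrow> K = {x \<in> W. lform c x = 0} \<and> (\<exists>x\<in>W. lform c x \<noteq> 0)"

definition hyperplane_of :: "(complex^'n) set \<Rightarrow> (complex^'n) set \<Rightarrow> bool" where
  "hyperplane_of W K \<longleftrightarrow> (\<exists>c. defining_form W c K)"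

definition indep_hyps :: "(complex^'n) set \<Rightarrow> (complex^'n) set set \<Rightarrow> bool" where
  "indep_hyps W S \<longleftrightarrow> finite S \<and> (\<exists>c. (\<forall>K\<in>S. defining_form W (c K) K) \<and>
     (\<forall>a. (\<forall>x\<in>W. (\<Sum>K\<in>S. a K * lform (c K) x) = 0) \<longrightarrow> (\<forall>K\<in>S. a K = 0)))"

definition is_arrangement :: "(complex^'n) set \<Rightarrow> (complex^'n) set set \<Rightarrow> bool" where
  "is_arrangement W B \<longleftrightarrow> subspace W \<and> finite B \<and> (\<forall>K\<in>B. hyperplane_of W K)"

definition is_ordering :: "('a \<Rightarrow> nat) \<Rightarrow> 'a set \<Rightarrow> bool" where
  "is_ordering \<tau> B \<longleftrightarrow> bij_betw \<tau> B {1..card B}"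

definition Or :: "nat \<Rightarrow> (complex^'n) set \<Rightarrow> (complex^'n) set set \<Rightarrow> (complex^'n) set list set" where
  "Or k W B = {S. length S = k \<and> distinct S \<and> set S \<subseteq> B \<and> indep_hyps W (set S)}"

definition BCB :: "nat \<Rightarrow> ((complex^'n) set \<Rightarrow> nat) \<Rightarrow> (complex^'n) set \<Rightarrow> (complex^'n) set set
     \<Rightarrow> (complex^'n) set list set" where
  "BCB k \<tau> W B = (if k = 0 then {[]} else
     {S \<in> Or k W B. sorted_wrt (\<lambda>x y. \<tau> x < \<tau> y) S \<and>
        (\<forall>G\<in>B - set S. indep_hyps W ({G} \<union> {Hi \<in> set S. \<tau> Hi > \<tau> G}))})"

definition restr_arr :: "(complex^'n) set set \<Rightarrow> (complex^'n) set \<Rightarrow> (complex^'n) set set" where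
  "restr_arr A H = (\<lambda>H'. H' \<inter> H) ` (A - {H})"

definition compatible :: "((complex^'n) set \<Rightarrow> nat) \<Rightarrow> (complex^'n) set set \<Rightarrow> (complex^'n) set \<Rightarrow> bool" where
  "compatible \<sigma> A H \<longleftrightarrow> \<sigma> H = card A \<and>
     (\<forall>H1\<in>A. \<forall>H2\<in>A. \<forall>H3\<in>A. H1 \<inter> H = H3 \<inter> H \<and> \<sigma> H1 < \<sigma> H2 \<and> \<sigma> H2 < \<sigma> H3
        \<longrightarrow> H1 \<inter> H = H2 \<inter> H)"

definition lift_min :: "((complex^'n) set \<Rightarrow> nat) \<Rightarrow> (complex^'n) set set \<Rightarrow> (complex^'n) set
     \<Rightarrow> (complex^'n) set \<Rightarrow> (complex^'n) set" where
  "lift_min \<sigma> A H K = (ARG_MIN \<sigma> H''. H'' \<in> A - {H} \<and> H'' \<inter> H = K)"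

text \<open>sigma|H: the induced ordering of A|H (fibres are ordered as intervals of sigma;
the rank of K equals the rank of its least element l_sigma K).\<close>
definition induced_ord :: "((complex^'n) set \<Rightarrow> nat) \<Rightarrow> (complex^'n) set set \<Rightarrow> (complex^'n) set
     \<Rightarrow> (complex^'n) set \<Rightarrow> nat" where
  "induced_ord \<sigma> A H K =
     card {K' \<in> restr_arr A H. \<sigma> (lift_min \<sigma> A H K') \<le> \<sigma> (lift_min \<sigma> A H K)}"

end

theory Submission
  imports Defs
begin

text \<open>A tuple in BCB^k(A) either avoids H, and then lies in BCB^k(A - {H}) because the extra
  condition at G = H only asks {H} to be independent, or, H being \<sigma>-last, it ends with H.
  In the second case everything is governed by restriction to H: for hyperplanes G_i \<noteq> H the set
  {H, G_1, ..., G_m} is independent iff the traces G_i \<inter> H are pairwise distinct and independent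
  in H, because linear forms together with a nonzero form h are independent iff their
  restrictions to ker h are. The broken-circuit condition at l_\<sigma>(G_i \<inter> H) forces every G_i to be
  the \<sigma>-least element of its fibre, so the tuple is (l_\<sigma>(K_1), ..., l_\<sigma>(K_{k-1}), H); as l_\<sigma> turns
  the order \<sigma>|H into \<sigma>, the conditions on this tuple in A and on (K_1, ..., K_{k-1}) in A|H then
  correspond term by term.\<close>

lemma lform_add: "lform c (x + y) = lform c x + lform c y"
  by (simp add: lform_def distrib_left sum.distrib)

lemma lform_scale: "lform c (t *s x) = t * lform c x"
  by (simp add: lform_def sum_distrib_left mult.left_commute)

lemma lform_diff: "lform c (x - y) = lform c x - lform c y"
  by (simp add: lform_def right_diff_distrib sum_subtractf)

lemma sum_lform: "(\<Sum>j\<in>S. a j * lform (c j) x) = lform (\<Sum>j\<in>S. a j *s c j) x"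
  by (simp add: lform_def sum_distrib_left sum_distrib_right mult.assoc sum.swap[of _ S])

lemma subspace_lform_kernel: "vec.subspace {x. lform c x = 0}"
  by (simp add: vec.subspace_def lform_add lform_scale) (simp add: lform_def)

lemma lform_proportional:
  assumes "vec.subspace W" "x0 \<in> W" "lform c x0 \<noteq> 0"
    and "\<forall>x\<in>W. lform c x = 0 \<longrightarrow> lform d x = 0" "x \<in> W"
  shows "lform d x = (lform d x0 / lform c x0) * lform c x"
proof -
  define y where "y = x - (lform c x / lform c x0) *s x0"
  have "y \<in> W"
    unfolding y_def using assms by (simp add: vec.subspace_diff vec.subspace_scale)
  moreover have "lform c y = 0"
    using assms(3) by (simp add: y_def lform_diff lform_scale)
  ultimately have "lform d y = 0" using assms(4) by blast
  then show ?thesis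
    using assms(3) by (simp add: y_def lform_diff lform_scale field_simps)
qed

definition forms_independent_on :: "(complex^'n) set \<Rightarrow> ('i \<Rightarrow> complex^'n) \<Rightarrow> 'i set \<Rightarrow> bool" where
  "forms_independent_on W c S \<longleftrightarrow>
     (\<forall>a. (\<forall>x\<in>W. (\<Sum>i\<in>S. a i * lform (c i) x) = 0) \<longrightarrow> (\<forall>i\<in>S. a i = 0))"

lemma forms_independent_onD:
  "forms_independent_on W c S \<Longrightarrow> (\<And>x. x \<in> W \<Longrightarrow> (\<Sum>i\<in>S. a i * lform (c i) x) = 0) \<Longrightarrow> i \<in> S
    \<Longrightarrow> a i = 0"
  unfolding forms_independent_on_def by blast

lemma forms_independent_on_subset:
  assumes indep: "forms_independent_on W c S" and "finite S" "T \<subseteq> S"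
  shows "forms_independent_on W c T"
  unfolding forms_independent_on_def
proof (intro allI impI ballI)
  fix a i assume zero: "\<forall>x\<in>W. (\<Sum>i\<in>T. a i * lform (c i) x) = 0" and "i \<in> T"
  define a' where "a' i = (if i \<in> T then a i else 0)" for i
  have "(\<Sum>i\<in>S. a' i * lform (c i) x) = (\<Sum>i\<in>T. a i * lform (c i) x)" for x
  proof -
    have "(\<Sum>i\<in>S. a' i * lform (c i) x) = (\<Sum>i\<in>T. a' i * lform (c i) x)"
      using \<open>finite S\<close> \<open>T \<subseteq> S\<close> by (intro sum.mono_neutral_right) (auto simp: a'_def)
    then show ?thesis by (simp add: a'_def)
  qed
  then have "a' i = 0" using forms_independent_onD[OF indep, of a' i] zero \<open>i \<in> T\<close> \<open>T \<subseteq> S\<close> by auto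
  then show "a i = 0" using \<open>i \<in> T\<close> by (simp add: a'_def)
qed

lemma forms_independent_on_reindex:
  assumes "inj_on f S" "\<forall>i\<in>S. d (f i) = c i"
  shows "forms_independent_on W d (f ` S) \<longleftrightarrow> forms_independent_on W c S"
proof -
  have sum_eq: "(\<Sum>j\<in>f ` S. a j * lform (d j) x) = (\<Sum>i\<in>S. a (f i) * lform (c i) x)" for a x
    using assms by (simp add: sum.reindex)
  show ?thesis
  proof
    assume indep: "forms_independent_on W d (f ` S)"
    show "forms_independent_on W c S"
      unfolding forms_independent_on_def
    proof (intro allI impI ballI)
      fix b i assume "\<forall>x\<in>W. (\<Sum>i\<in>S. b i * lform (c i) x) = 0" "i \<in> S"
      moreover have "b i = b (the_inv_into S f (f i))" if "i \<in> S" for i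
        using the_inv_into_f_f[OF assms(1) that] by simp
      ultimately show "b i = 0"
        using forms_independent_onD[OF indep, of "b \<circ> the_inv_into S f" "f i"]
        by (simp add: sum_eq)
    qed
  next
    assume "forms_independent_on W c S"
    then show "forms_independent_on W d (f ` S)"
      unfolding forms_independent_on_def sum_eq by auto
  qed
qed

lemma forms_independent_on_scaled:
  assumes indep: "forms_independent_on W c S"
    and scaled: "\<forall>i\<in>S. l i \<noteq> 0 \<and> (\<forall>x\<in>W. lform (d i) x = l i * lform (c i) x)"
  shows "forms_independent_on W d S"
  unfolding forms_independent_on_def
proof (intro allI impI ballI)
  fix a i assume zero: "\<forall>x\<in>W. (\<Sum>i\<in>S. a i * lform (d i) x) = 0" and "i \<in> S"
  have "(\<Sum>i\<in>S. (a i * l i) * lform (c i) x) = (\<Sum>i\<in>S. a i * lform (d i) x)" if "x \<in> W" for x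
    using scaled that by (intro sum.cong) auto
  then have "a i * l i = 0"
    using forms_independent_onD[OF indep, of "\<lambda>i. a i * l i" i] zero \<open>i \<in> S\<close> by simp
  then show "a i = 0" using scaled \<open>i \<in> S\<close> by simp
qed

lemma forms_independent_on_insert_kernel:
  assumes "finite S" "i \<notin> S" "lform (c i) y0 \<noteq> 0"
  shows "forms_independent_on UNIV c (insert i S) \<longleftrightarrow>
    forms_independent_on {x. lform (c i) x = 0} c S"
proof -
  have split: "(\<Sum>j\<in>insert i S. a j * lform (c j) x) = a i * lform (c i) x + (\<Sum>j\<in>S. a j * lform (c j) x)"
    for a x using assms(1,2) by simp
  show ?thesis
  proof
    assume indep: "forms_independent_on UNIV c (insert i S)"
    show "forms_independent_on {x. lform (c i) x = 0} c S"
      unfolding forms_independent_on_def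
    proof (intro allI impI ballI)
      fix a j assume zero: "\<forall>x\<in>{x. lform (c i) x = 0}. (\<Sum>j\<in>S. a j * lform (c j) x) = 0" and "j \<in> S"
      define \<phi> where "\<phi> = (\<Sum>j\<in>S. a j *s c j)"
      define m where "m = lform \<phi> y0 / lform (c i) y0"
      \<comment> \<open>the combination vanishes on the kernel of the i-th form, hence is a multiple of it\<close>
      have "lform \<phi> x = m * lform (c i) x" for x
        unfolding m_def
        by (rule lform_proportional[OF vec.subspace_UNIV]) (use assms(3) zero in \<open>auto simp: \<phi>_def sum_lform\<close>)
      moreover have "(\<Sum>j\<in>S. (a(i := - m)) j * lform (c j) x) = lform \<phi> x" for x
        using assms(2) unfolding \<phi>_def sum_lform[symmetric] by (intro sum.cong) auto
      ultimately have "\<forall>x. (\<Sum>j\<in>insert i S. (a(i := - m)) j * lform (c j) x) = 0"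
        by (simp add: split)
      moreover have "j \<noteq> i" using \<open>j \<in> S\<close> assms(2) by blast
      ultimately show "a j = 0"
        using forms_independent_onD[OF indep, of "a(i := - m)" j] \<open>j \<in> S\<close> by simp
    qed
  next
    assume indep: "forms_independent_on {x. lform (c i) x = 0} c S"
    show "forms_independent_on UNIV c (insert i S)"
      unfolding forms_independent_on_def
    proof (intro allI impI ballI)
      fix b j assume zero: "\<forall>x\<in>UNIV. (\<Sum>j\<in>insert i S. b j * lform (c j) x) = 0" and "j \<in> insert i S"
      have "(\<Sum>j\<in>S. b j * lform (c j) x) = 0" if "lform (c i) x = 0" for x
        using zero split[of b x] that by simp
      then have S_zero: "b j = 0" if "j \<in> S" for j
        using forms_independent_onD[OF indep, of b j] that by simp
      then have "b i * lform (c i) y0 = 0" using zero split[of b y0] by simp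
      then have "b i = 0" using assms(3) by simp
      then show "b j = 0" using S_zero \<open>j \<in> insert i S\<close> by blast
    qed
  qed
qed

lemma defining_forms_proportional:
  assumes "vec.subspace W" "defining_form W c K" "defining_form W d K"
  obtains l where "l \<noteq> 0" "\<forall>x\<in>W. lform d x = l * lform c x"
proof -
  obtain x0 where x0: "x0 \<in> W" "lform c x0 \<noteq> 0"
    using assms(2) unfolding defining_form_def by blast
  define l where "l = lform d x0 / lform c x0"
  have proportional: "\<forall>x\<in>W. lform d x = l * lform c x"
    unfolding l_def
    by (intro ballI lform_proportional[OF assms(1) x0]) (use assms(2,3) in \<open>auto simp: defining_form_def\<close>)
  have "lform d x0 \<noteq> 0"
    using assms(2,3) x0 unfolding defining_form_def by blast
  then have "l \<noteq> 0" using x0(2) by (simp add: l_def)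
  with proportional show thesis by (rule that[rotated])
qed

lemma indep_hyps_iff_ex_forms:
  "indep_hyps W S \<longleftrightarrow>
    finite S \<and> (\<exists>c. (\<forall>K\<in>S. defining_form W (c K) K) \<and> forms_independent_on W c S)"
  by (simp add: indep_hyps_def forms_independent_on_def)

lemma indep_hyps_iff_forms:
  assumes "vec.subspace W" "\<forall>K\<in>S. defining_form W (d K) K"
  shows "indep_hyps W S \<longleftrightarrow> finite S \<and> forms_independent_on W d S"
proof
  assume "indep_hyps W S"
  then obtain c where fin: "finite S" and c: "\<forall>K\<in>S. defining_form W (c K) K"
    and indep: "forms_independent_on W c S"
    unfolding indep_hyps_iff_ex_forms by blast
  have "\<exists>l. l \<noteq> 0 \<and> (\<forall>x\<in>W. lform (d K) x = l * lform (c K) x)" if "K \<in> S" for K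
  proof -
    have "defining_form W (c K) K" "defining_form W (d K) K" using c assms(2) that by auto
    then obtain l where "l \<noteq> 0" "\<forall>x\<in>W. lform (d K) x = l * lform (c K) x"
      by (rule defining_forms_proportional[OF assms(1)])
    then show ?thesis by blast
  qed
  then obtain l where "\<forall>K\<in>S. l K \<noteq> 0 \<and> (\<forall>x\<in>W. lform (d K) x = l K * lform (c K) x)"
    using bchoice[of S "\<lambda>K l. l \<noteq> 0 \<and> (\<forall>x\<in>W. lform (d K) x = l * lform (c K) x)"] by blast
  then show "finite S \<and> forms_independent_on W d S"
    using fin forms_independent_on_scaled[OF indep] by blast
next
  assume "finite S \<and> forms_independent_on W d S"
  then show "indep_hyps W S"
    using assms(2) unfolding indep_hyps_iff_ex_forms by blast
qed

lemma indep_hyps_singleton: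
  assumes "defining_form W c K"
  shows "indep_hyps W {K}"
proof -
  obtain x where "x \<in> W" "lform c x \<noteq> 0" using assms by (auto simp: defining_form_def)
  then have "forms_independent_on W (\<lambda>_. c) {K}" by (auto simp: forms_independent_on_def)
  then show ?thesis using assms unfolding indep_hyps_iff_ex_forms by (intro conjI exI[of _ "\<lambda>_. c"]) auto
qed

lemma same_hyperplane_forms_dependent:
  assumes "vec.subspace W" "defining_form W (c i) K" "defining_form W (c j) K" "i \<noteq> j"
  shows "\<not> forms_independent_on W c {i, j}"
proof
  obtain l where l: "\<forall>x\<in>W. lform (c j) x = l * lform (c i) x"
    by (rule defining_forms_proportional[OF assms(1-3)])
  define a where "a k = (if k = i then - l else 1)" for k
  assume "forms_independent_on W c {i, j}"
  moreover have "(\<Sum>k\<in>{i, j}. a k * lform (c k) x) = 0" if "x \<in> W" for x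
    using l that assms(4) by (simp add: a_def)
  ultimately have "a j = 0" by (rule forms_independent_onD) simp_all
  then show False using assms(4) by (simp add: a_def)
qed

lemma subspace_hyperplane_of_UNIV: "hyperplane_of UNIV H \<Longrightarrow> vec.subspace H"
  unfolding hyperplane_of_def defining_form_def using subspace_lform_kernel by auto

lemma defining_form_restrict:
  assumes G: "defining_form UNIV c G" and H: "defining_form UNIV d H" and "G \<noteq> H"
  shows "defining_form H c (G \<inter> H)"
proof -
  have "\<exists>x\<in>H. lform c x \<noteq> 0"
  proof (rule ccontr)
    assume "\<not> (\<exists>x\<in>H. lform c x \<noteq> 0)"
    then have ker: "\<forall>x\<in>UNIV. lform d x = 0 \<longrightarrow> lform c x = 0"
      using H by (auto simp: defining_form_def)
    obtain x0 where x0: "lform d x0 \<noteq> 0" using H by (auto simp: defining_form_def)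
    define l where "l = lform c x0 / lform d x0"
    have proportional: "lform c x = l * lform d x" for x
      unfolding l_def by (rule lform_proportional[OF vec.subspace_UNIV _ x0 ker]) simp_all
    obtain x1 where "lform c x1 \<noteq> 0" using G by (auto simp: defining_form_def)
    then have "l \<noteq> 0" using proportional[of x1] by auto
    then have "G = H" using G H unfolding defining_form_def proportional by auto
    then show False using \<open>G \<noteq> H\<close> by contradiction
  qed
  then show ?thesis using G by (auto simp: defining_form_def)
qed

lemma hyperplane_of_restrict:
  "hyperplane_of UNIV G \<Longrightarrow> hyperplane_of UNIV H \<Longrightarrow> G \<noteq> H \<Longrightarrow> hyperplane_of H (G \<inter> H)"
  unfolding hyperplane_of_def using defining_form_restrict by blast

lemma indep_hyps_insert_iff:
  assumes hyp: "\<forall>G\<in>insert H S. hyperplane_of UNIV G" and "H \<notin> S" "finite S"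
  shows "indep_hyps UNIV (insert H S) \<longleftrightarrow>
    inj_on (\<lambda>G. G \<inter> H) S \<and> indep_hyps H ((\<lambda>G. G \<inter> H) ` S)"
proof -
  have hH: "hyperplane_of UNIV H" using hyp by simp
  obtain c where c: "\<forall>G\<in>insert H S. defining_form UNIV (c G) G"
    using bchoice[OF hyp[unfolded hyperplane_of_def]] by blast
  then have H_ker: "{x. lform (c H) x = 0} = H" by (simp add: defining_form_def)
  obtain y0 where y0: "lform (c H) y0 \<noteq> 0" using c by (auto simp: defining_form_def)
  have restr: "\<forall>G\<in>S. defining_form H (c G) (G \<inter> H)"
    using c defining_form_restrict \<open>H \<notin> S\<close> by fastforce
  have "indep_hyps UNIV (insert H S) \<longleftrightarrow> forms_independent_on UNIV c (insert H S)"
    using indep_hyps_iff_forms[OF vec.subspace_UNIV c] \<open>finite S\<close> by simp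
  also have "\<dots> \<longleftrightarrow> forms_independent_on H c S"
    using forms_independent_on_insert_kernel[of S H c y0] \<open>finite S\<close> \<open>H \<notin> S\<close> y0 H_ker
    by simp
  also have "\<dots> \<longleftrightarrow> inj_on (\<lambda>G. G \<inter> H) S \<and> indep_hyps H ((\<lambda>G. G \<inter> H) ` S)"
  proof (cases "inj_on (\<lambda>G. G \<inter> H) S")
    case True
    define d where "d = c \<circ> the_inv_into S (\<lambda>G. G \<inter> H)"
    have d: "\<forall>G\<in>S. d (G \<inter> H) = c G" using the_inv_into_f_f[OF True] by (simp add: d_def)
    have "\<forall>K\<in>(\<lambda>G. G \<inter> H) ` S. defining_form H (d K) K" using restr d by auto
    from indep_hyps_iff_forms[OF subspace_hyperplane_of_UNIV[OF hH] this] \<open>finite S\<close>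
    have "indep_hyps H ((\<lambda>G. G \<inter> H) ` S) \<longleftrightarrow> forms_independent_on H d ((\<lambda>G. G \<inter> H) ` S)"
      by simp
    then show ?thesis using forms_independent_on_reindex[OF True d] True by simp
  next
    case False
    then obtain G1 G2 where G: "G1 \<in> S" "G2 \<in> S" "G1 \<noteq> G2" "G1 \<inter> H = G2 \<inter> H"
      unfolding inj_on_def by blast
    then have "defining_form H (c G1) (G1 \<inter> H)" "defining_form H (c G2) (G1 \<inter> H)"
      using restr by auto
    with subspace_hyperplane_of_UNIV[OF hH] G(3) have "\<not> forms_independent_on H c {G1, G2}"
      by (intro same_hyperplane_forms_dependent)
    moreover have "{G1, G2} \<subseteq> S" using G by simp
    ultimately show ?thesis
      using forms_independent_on_subset[OF _ \<open>finite S\<close>] False by blast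
  qed
  finally show ?thesis .
qed

lemma indep_hyps_subset:
  assumes "indep_hyps W S" "T \<subseteq> S"
  shows "indep_hyps W T"
proof -
  obtain c where "finite S" "\<forall>K\<in>S. defining_form W (c K) K" "forms_independent_on W c S"
    using assms(1) unfolding indep_hyps_iff_ex_forms by blast
  then show ?thesis
    using assms(2) forms_independent_on_subset finite_subset unfolding indep_hyps_iff_ex_forms by blast
qed

definition no_broken_circuit :: "((complex^'n) set \<Rightarrow> nat) \<Rightarrow> (complex^'n) set \<Rightarrow>
    (complex^'n) set set \<Rightarrow> (complex^'n) set list \<Rightarrow> bool" where
  "no_broken_circuit \<tau> W B S \<longleftrightarrow> (\<forall>G\<in>B - set S. indep_hyps W ({G} \<union> {Hi \<in> set S. \<tau> G < \<tau> Hi}))"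

lemma mem_BCB_iff:
  assumes "\<forall>K\<in>B. hyperplane_of W K"
  shows "S \<in> BCB k \<tau> W B \<longleftrightarrow>
    S \<in> Or k W B \<and> sorted_wrt (\<lambda>x y. \<tau> x < \<tau> y) S \<and> no_broken_circuit \<tau> W B S"
proof (cases "k = 0")
  case True
  have "indep_hyps W {G}" if "G \<in> B" for G
    using assms that indep_hyps_singleton unfolding hyperplane_of_def by blast
  then show ?thesis
    using True by (auto simp: BCB_def Or_def no_broken_circuit_def indep_hyps_def)
qed (simp add: BCB_def no_broken_circuit_def)

lemma set_BCB_subset: "S \<in> BCB k \<tau> W B \<Longrightarrow> set S \<subseteq> B"
  by (auto simp: BCB_def Or_def split: if_splits)

locale last_hyperplane =
  fixes A :: "(complex^'n) set set" and H :: "(complex^'n) set" and \<sigma> :: "(complex^'n) set \<Rightarrow> nat"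
  assumes hyperplanes: "\<forall>G\<in>A. hyperplane_of UNIV G"
    and finite_A: "finite A"
    and H_in_A: "H \<in> A"
    and inj_\<sigma>: "inj_on \<sigma> A"
    and less_\<sigma>_H: "\<And>G. G \<in> A \<Longrightarrow> G \<noteq> H \<Longrightarrow> \<sigma> G < \<sigma> H"
begin

abbreviation "lift \<equiv> lift_min \<sigma> A H"
abbreviation "restr \<equiv> restr_arr A H"
abbreviation "\<tau> \<equiv> induced_ord \<sigma> A H"

lemma trace_in_restr_arr: "G \<in> A \<Longrightarrow> G \<noteq> H \<Longrightarrow> G \<inter> H \<in> restr"
  unfolding restr_arr_def by blast

lemma hyperplanes_restr_arr: "\<forall>K\<in>restr. hyperplane_of H K"
  using hyperplanes H_in_A hyperplane_of_restrict unfolding restr_arr_def by blast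

lemma lift_min_least_in_fibre:
  assumes "K \<in> restr"
  shows "lift K \<in> A" "lift K \<noteq> H" "lift K \<inter> H = K"
    and "\<And>G. G \<in> A \<Longrightarrow> G \<noteq> H \<Longrightarrow> G \<inter> H = K \<Longrightarrow> \<sigma> (lift K) \<le> \<sigma> G"
proof -
  obtain G0 where "G0 \<in> A - {H} \<and> G0 \<inter> H = K" using assms unfolding restr_arr_def by blast
  note arg_min_nat_lemma[of "\<lambda>G. G \<in> A - {H} \<and> G \<inter> H = K", OF this, of \<sigma>]
  then show "lift K \<in> A" "lift K \<noteq> H" "lift K \<inter> H = K"
    and "\<And>G. G \<in> A \<Longrightarrow> G \<noteq> H \<Longrightarrow> G \<inter> H = K \<Longrightarrow> \<sigma> (lift K) \<le> \<sigma> G"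
    unfolding lift_min_def by auto
qed

lemma lift_min_trace_le: "G \<in> A \<Longrightarrow> G \<noteq> H \<Longrightarrow> \<sigma> (lift (G \<inter> H)) \<le> \<sigma> G"
  using lift_min_least_in_fibre(4) trace_in_restr_arr by blast

lemma induced_ord_less_iff:
  assumes "K \<in> restr" "K' \<in> restr"
  shows "\<tau> K < \<tau> K' \<longleftrightarrow> \<sigma> (lift K) < \<sigma> (lift K')"
proof -
  define below where "below K = {K'' \<in> restr. \<sigma> (lift K'') \<le> \<sigma> (lift K)}" for K
  have \<tau>_card: "\<tau> K = card (below K)" for K
    unfolding below_def induced_ord_def by simp
  have fin: "finite (below K)" for K
    using finite_A unfolding below_def restr_arr_def by simp
  show ?thesis
  proof
    assume "\<tau> K < \<tau> K'"
    show "\<sigma> (lift K) < \<sigma> (lift K')"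
    proof (rule ccontr)
      assume "\<not> \<sigma> (lift K) < \<sigma> (lift K')"
      then have "below K' \<subseteq> below K" unfolding below_def by auto
      then have "\<tau> K' \<le> \<tau> K" unfolding \<tau>_card by (rule card_mono[OF fin])
      then show False using \<open>\<tau> K < \<tau> K'\<close> by simp
    qed
  next
    assume "\<sigma> (lift K) < \<sigma> (lift K')"
    then have "below K \<subseteq> below K'" "K' \<in> below K' - below K"
      using assms by (auto simp: below_def)
    then have "below K \<subset> below K'" by blast
    then show "\<tau> K < \<tau> K'" unfolding \<tau>_card by (rule psubset_card_mono[OF fin])
  qed
qed

lemma indep_lift_iff:
  assumes "X \<subseteq> restr"
  shows "indep_hyps UNIV (insert H (lift ` X)) \<longleftrightarrow> indep_hyps H X"
proof -
  have trace_lift: "lift K \<inter> H = K" if "K \<in> X" for K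
    using assms lift_min_least_in_fibre(3) that by blast
  have "\<forall>G\<in>insert H (lift ` X). hyperplane_of UNIV G"
    using hyperplanes H_in_A assms lift_min_least_in_fibre(1) by blast
  moreover have "H \<notin> lift ` X" using assms lift_min_least_in_fibre(2) by blast
  moreover have "finite (lift ` X)"
    using assms finite_A finite_subset unfolding restr_arr_def by blast
  moreover have "inj_on (\<lambda>G. G \<inter> H) (lift ` X)"
    using trace_lift by (auto intro!: inj_onI)
  moreover have "(\<lambda>G. G \<inter> H) ` lift ` X = X"
    unfolding image_image using trace_lift by simp
  ultimately show ?thesis by (simp add: indep_hyps_insert_iff)
qed

lemma BCB_iff_delete:
  assumes "H \<notin> set S"
  shows "S \<in> BCB k \<sigma> UNIV A \<longleftrightarrow> S \<in> BCB k \<sigma> UNIV (A - {H})"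
proof -
  have hyperplanes_delete: "\<forall>G\<in>A - {H}. hyperplane_of UNIV G" using hyperplanes by blast
  have "no_broken_circuit \<sigma> UNIV A S \<longleftrightarrow> no_broken_circuit \<sigma> UNIV (A - {H}) S"
    if "set S \<subseteq> A"
  proof -
    have "{H} \<union> {Hi \<in> set S. \<sigma> H < \<sigma> Hi} = {H}"
      using that less_\<sigma>_H assms by fastforce
    then have "indep_hyps UNIV ({H} \<union> {Hi \<in> set S. \<sigma> H < \<sigma> Hi})"
      using hyperplanes H_in_A indep_hyps_singleton unfolding hyperplane_of_def by metis
    moreover have "A - set S = insert H (A - {H} - set S)" using H_in_A assms by blast
    ultimately show ?thesis unfolding no_broken_circuit_def by simp
  qed
  moreover have "S \<in> Or k UNIV A \<longleftrightarrow> S \<in> Or k UNIV (A - {H})"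
    using assms by (auto simp: Or_def)
  moreover have "S \<in> Or k UNIV A \<Longrightarrow> set S \<subseteq> A" by (simp add: Or_def)
  ultimately show ?thesis
    unfolding mem_BCB_iff[OF hyperplanes] mem_BCB_iff[OF hyperplanes_delete] by blast
qed

lemma indep_upper_set_iff:
  assumes Ks: "set Ks \<subseteq> restr" and G: "G \<in> A" "G \<noteq> H"
  shows "indep_hyps UNIV ({G} \<union> {Hi \<in> set (map lift Ks @ [H]). \<sigma> G < \<sigma> Hi}) \<longleftrightarrow>
    indep_hyps H (insert (G \<inter> H) {K \<in> set Ks. \<sigma> G < \<sigma> (lift K)})"
proof -
  define X where "X = {K \<in> set Ks. \<sigma> G < \<sigma> (lift K)}"
  have X: "X \<subseteq> restr" "\<And>K. K \<in> X \<Longrightarrow> lift K \<inter> H = K" "\<And>K. K \<in> X \<Longrightarrow> \<sigma> G < \<sigma> (lift K)"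
    using Ks lift_min_least_in_fibre(3) by (auto simp: X_def)
  have "{G} \<union> {Hi \<in> set (map lift Ks @ [H]). \<sigma> G < \<sigma> Hi} = insert H (insert G (lift ` X))"
    using less_\<sigma>_H[OF G] by (auto simp: X_def)
  moreover have "\<forall>G'\<in>insert H (insert G (lift ` X)). hyperplane_of UNIV G'"
    using hyperplanes H_in_A G X(1) lift_min_least_in_fibre(1) by blast
  moreover have "H \<notin> insert G (lift ` X)" using G X(1) lift_min_least_in_fibre(2) by blast
  moreover have "finite X" using finite_subset[OF _ finite_set[of Ks]] by (simp add: X_def)
  moreover have "inj_on (\<lambda>G. G \<inter> H) (insert G (lift ` X))"
  proof -
    have "G \<inter> H \<notin> X"
    proof
      assume "G \<inter> H \<in> X"
      then have "\<sigma> G < \<sigma> (lift (G \<inter> H))" by (rule X(3))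
      then show False using lift_min_trace_le[OF G] by simp
    qed
    then show ?thesis using X(2) by (auto simp: inj_on_def)
  qed
  moreover have "(\<lambda>G. G \<inter> H) ` insert G (lift ` X) = insert (G \<inter> H) X"
    using X(2) by (auto simp: image_image)
  ultimately show ?thesis by (simp add: indep_hyps_insert_iff X_def)
qed

lemma Or_lift_iff:
  assumes "set Ks \<subseteq> restr" "k \<ge> 1"
  shows "map lift Ks @ [H] \<in> Or k UNIV A \<longleftrightarrow> Ks \<in> Or (k - 1) H restr"
proof -
  have "inj_on lift restr" using lift_min_least_in_fibre(3) by (metis inj_onI)
  then have "distinct (map lift Ks) \<longleftrightarrow> distinct Ks"
    using assms(1) by (simp add: distinct_map inj_on_subset)
  moreover have "set (map lift Ks @ [H]) = insert H (lift ` set Ks)" by simp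
  moreover have "set (map lift Ks @ [H]) \<subseteq> A" "H \<notin> set (map lift Ks)"
    using assms(1) lift_min_least_in_fibre(1,2) H_in_A by auto
  ultimately show ?thesis
    using assms indep_lift_iff[OF assms(1)] by (auto simp: Or_def)
qed

lemma sorted_lift_iff:
  assumes "set Ks \<subseteq> restr"
  shows "sorted_wrt (\<lambda>x y. \<sigma> x < \<sigma> y) (map lift Ks @ [H]) \<longleftrightarrow> sorted_wrt (\<lambda>x y. \<tau> x < \<tau> y) Ks"
proof -
  have "sorted_wrt (\<lambda>x y. \<sigma> (lift x) < \<sigma> (lift y)) Ks \<longleftrightarrow> sorted_wrt (\<lambda>x y. \<tau> x < \<tau> y) Ks"
  proof
    show "sorted_wrt (\<lambda>x y. \<tau> x < \<tau> y) Ks" if "sorted_wrt (\<lambda>x y. \<sigma> (lift x) < \<sigma> (lift y)) Ks"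
      using that by (rule sorted_wrt_mono_rel[rotated]) (use assms induced_ord_less_iff in blast)
    show "sorted_wrt (\<lambda>x y. \<sigma> (lift x) < \<sigma> (lift y)) Ks" if "sorted_wrt (\<lambda>x y. \<tau> x < \<tau> y) Ks"
      using that by (rule sorted_wrt_mono_rel[rotated]) (use assms induced_ord_less_iff in blast)
  qed
  moreover have "\<sigma> (lift K) < \<sigma> H" if "K \<in> set Ks" for K
    using that assms lift_min_least_in_fibre(1,2) less_\<sigma>_H by blast
  ultimately show ?thesis by (auto simp: sorted_wrt_append sorted_wrt_map)
qed

lemma no_broken_circuit_restr_if_lift:
  assumes Ks: "set Ks \<subseteq> restr" and nbc: "no_broken_circuit \<sigma> UNIV A (map lift Ks @ [H])"
  shows "no_broken_circuit \<tau> H restr Ks"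
  unfolding no_broken_circuit_def
proof
  fix K assume K: "K \<in> restr - set Ks"
  have G: "lift K \<in> A" "lift K \<noteq> H" "lift K \<inter> H = K" using K lift_min_least_in_fibre(1-3) by auto
  moreover have "lift K \<notin> set (map lift Ks)"
  proof
    assume "lift K \<in> set (map lift Ks)"
    then obtain K' where "K' \<in> set Ks" "lift K = lift K'" by auto
    then have "K = K'" using G(3) Ks lift_min_least_in_fibre(3) by (metis subsetD)
    then show False using K \<open>K' \<in> set Ks\<close> by simp
  qed
  ultimately have "indep_hyps UNIV ({lift K} \<union> {Hi \<in> set (map lift Ks @ [H]). \<sigma> (lift K) < \<sigma> Hi})"
    using nbc unfolding no_broken_circuit_def by simp
  moreover have "{K' \<in> set Ks. \<sigma> (lift K) < \<sigma> (lift K')} = {K' \<in> set Ks. \<tau> K < \<tau> K'}"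
    using K Ks induced_ord_less_iff by auto
  ultimately show "indep_hyps H ({K} \<union> {K' \<in> set Ks. \<tau> K < \<tau> K'})"
    using indep_upper_set_iff[OF Ks G(1,2)] G(3) by simp
qed

lemma no_broken_circuit_lift_if_restr:
  assumes Ks: "set Ks \<subseteq> restr" and indep: "indep_hyps H (set Ks)"
    and nbc: "no_broken_circuit \<tau> H restr Ks"
  shows "no_broken_circuit \<sigma> UNIV A (map lift Ks @ [H])"
  unfolding no_broken_circuit_def
proof
  fix G assume "G \<in> A - set (map lift Ks @ [H])"
  then have G: "G \<in> A" "G \<noteq> H" by auto
  define K where "K = G \<inter> H"
  have K: "K \<in> restr" "\<sigma> (lift K) \<le> \<sigma> G"
    unfolding K_def using trace_in_restr_arr lift_min_trace_le G by auto
  have "indep_hyps H (insert K {K' \<in> set Ks. \<sigma> G < \<sigma> (lift K')})"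
  proof (cases "K \<in> set Ks")
    case True
    then have "insert K {K' \<in> set Ks. \<sigma> G < \<sigma> (lift K')} \<subseteq> set Ks" by blast
    then show ?thesis by (rule indep_hyps_subset[OF indep])
  next
    case False
    then have nbc_K: "indep_hyps H ({K} \<union> {K' \<in> set Ks. \<tau> K < \<tau> K'})"
      using nbc K(1) unfolding no_broken_circuit_def by blast
    have "\<tau> K < \<tau> K'" if "K' \<in> set Ks" "\<sigma> G < \<sigma> (lift K')" for K'
      using induced_ord_less_iff[of K K'] K Ks that by auto
    then have "insert K {K' \<in> set Ks. \<sigma> G < \<sigma> (lift K')} \<subseteq> {K} \<union> {K' \<in> set Ks. \<tau> K < \<tau> K'}"
      by blast
    then show ?thesis by (rule indep_hyps_subset[OF nbc_K])
  qed
  then show "indep_hyps UNIV ({G} \<union> {Hi \<in> set (map lift Ks @ [H]). \<sigma> G < \<sigma> Hi})"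
    unfolding K_def using indep_upper_set_iff[OF Ks G(1,2)] by simp
qed

lemma BCB_lift_iff:
  assumes "set Ks \<subseteq> restr" "k \<ge> 1"
  shows "map lift Ks @ [H] \<in> BCB k \<sigma> UNIV A \<longleftrightarrow> Ks \<in> BCB (k - 1) \<tau> H restr"
proof -
  have "Ks \<in> Or (k - 1) H restr \<Longrightarrow> indep_hyps H (set Ks)" by (simp add: Or_def)
  then show ?thesis
    unfolding mem_BCB_iff[OF hyperplanes] mem_BCB_iff[OF hyperplanes_restr_arr]
      Or_lift_iff[OF assms] sorted_lift_iff[OF assms(1)]
    using no_broken_circuit_restr_if_lift[OF assms(1)] no_broken_circuit_lift_if_restr[OF assms(1)]
    by blast
qed

lemma inj_on_trace_if_indep:
  assumes "indep_hyps UNIV X" "X \<subseteq> A" "H \<in> X"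
  shows "inj_on (\<lambda>G. G \<inter> H) (X - {H})"
proof -
  have "insert H (X - {H}) = X" using assms(3) by blast
  moreover have "finite X" using assms(1) by (simp add: indep_hyps_def)
  moreover have "\<forall>G\<in>X. hyperplane_of UNIV G" using assms(2) hyperplanes by blast
  ultimately show ?thesis
    using indep_hyps_insert_iff[of H "X - {H}"] assms(1) by simp
qed

lemma BCB_last_H:
  assumes S: "S \<in> BCB k \<sigma> UNIV A" and "H \<in> set S"
  shows "S = butlast S @ [H]"
proof -
  have "S \<noteq> []" using \<open>H \<in> set S\<close> by auto
  then have S_eq: "butlast S @ [last S] = S" by (rule append_butlast_last_id)
  have "last S = H"
  proof (rule ccontr)
    assume "last S \<noteq> H"
    moreover have "H \<in> set (butlast S @ [last S])" using \<open>H \<in> set S\<close> by (simp only: S_eq)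
    ultimately have "H \<in> set (butlast S)" by auto
    moreover have "sorted_wrt (\<lambda>x y. \<sigma> x < \<sigma> y) (butlast S @ [last S])"
      using S hyperplanes by (simp add: S_eq mem_BCB_iff)
    ultimately have "\<sigma> H < \<sigma> (last S)" by (simp add: sorted_wrt_append)
    moreover have "last S \<in> A" using set_BCB_subset[OF S] \<open>S \<noteq> []\<close> by auto
    ultimately show False using less_\<sigma>_H \<open>last S \<noteq> H\<close> by fastforce
  qed
  then show ?thesis using S_eq by simp
qed

lemma BCB_fibre_least:
  assumes S: "S \<in> BCB k \<sigma> UNIV A" "H \<in> set S" and G: "G \<in> set S" "G \<noteq> H"
  shows "lift (G \<inter> H) = G"
proof (rule ccontr)
  define G' where "G' = lift (G \<inter> H)"
  assume "lift (G \<inter> H) \<noteq> G"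
  then have "G' \<noteq> G" by (simp add: G'_def)
  have "G \<in> A" using set_BCB_subset[OF S(1)] G(1) by blast
  then have G': "G' \<in> A" "G' \<noteq> H" "G' \<inter> H = G \<inter> H" "\<sigma> G' \<le> \<sigma> G"
    unfolding G'_def using lift_min_least_in_fibre(1-3) trace_in_restr_arr lift_min_trace_le G(2) by auto
  have "\<sigma> G' \<noteq> \<sigma> G" using inj_\<sigma> G'(1) \<open>G \<in> A\<close> \<open>G' \<noteq> G\<close> by (meson inj_on_eq_iff)
  with G'(4) have "\<sigma> G' < \<sigma> G" by simp
  \<comment> \<open>an independent set containing H meets each fibre at most once\<close>
  have no_indep: "\<not> indep_hyps UNIV X" if "X \<subseteq> A" "{G', G, H} \<subseteq> X" for X
  proof
    assume "indep_hyps UNIV X"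
    then have "inj_on (\<lambda>G. G \<inter> H) (X - {H})" using inj_on_trace_if_indep that by blast
    then show False using that G(2) G'(2,3) \<open>G' \<noteq> G\<close> by (auto simp: inj_on_def)
  qed
  have bcb: "S \<in> Or k UNIV A" "no_broken_circuit \<sigma> UNIV A S"
    using S(1) hyperplanes by (simp_all add: mem_BCB_iff)
  show False
  proof (cases "G' \<in> set S")
    case True
    then show False
      using no_indep[of "set S"] bcb(1) S(2) G(1) by (auto simp: Or_def)
  next
    case False
    then have "indep_hyps UNIV ({G'} \<union> {Hi \<in> set S. \<sigma> G' < \<sigma> Hi})"
      using bcb(2) G'(1) unfolding no_broken_circuit_def by blast
    moreover have "{G'} \<union> {Hi \<in> set S. \<sigma> G' < \<sigma> Hi} \<subseteq> A"
      using G'(1) set_BCB_subset[OF S(1)] by blast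
    moreover have "{G', G, H} \<subseteq> {G'} \<union> {Hi \<in> set S. \<sigma> G' < \<sigma> Hi}"
      using \<open>\<sigma> G' < \<sigma> G\<close> less_\<sigma>_H[OF G'(1,2)] G(1) S(2) by blast
    ultimately show False using no_indep by blast
  qed
qed

lemma BCB_containing_H:
  assumes S: "S \<in> BCB k \<sigma> UNIV A" "H \<in> set S"
  obtains Ks where "set Ks \<subseteq> restr" "S = map lift Ks @ [H]"
proof -
  obtain S0 where S0: "S = S0 @ [H]" using BCB_last_H[OF S] by blast
  have "distinct S" "set S \<subseteq> A" using S(1) hyperplanes by (simp_all add: mem_BCB_iff Or_def)
  then have S0_sub: "set S0 \<subseteq> A - {H}" unfolding S0 by auto
  then have traces: "set (map (\<lambda>G. G \<inter> H) S0) \<subseteq> restr"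
    using trace_in_restr_arr by auto
  have "lift (G \<inter> H) = G" if "G \<in> set S0" for G
    using BCB_fibre_least[OF S] S0_sub S0 that by auto
  then have "S = map lift (map (\<lambda>G. G \<inter> H) S0) @ [H]"
    unfolding S0 map_map by (simp add: map_idI)
  with traces show thesis by (rule that)
qed

lemma BCB_decomposition:
  assumes "k \<ge> 1"
  shows "BCB k \<sigma> UNIV A =
    BCB k \<sigma> UNIV (A - {H}) \<union> {map lift Ks @ [H] | Ks. Ks \<in> BCB (k - 1) \<tau> H restr}"
proof (intro equalityI subsetI)
  fix S assume S: "S \<in> BCB k \<sigma> UNIV A"
  show "S \<in> BCB k \<sigma> UNIV (A - {H}) \<union> {map lift Ks @ [H] | Ks. Ks \<in> BCB (k - 1) \<tau> H restr}"
  proof (cases "H \<in> set S")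
    case True
    then obtain Ks where "set Ks \<subseteq> restr" "S = map lift Ks @ [H]"
      by (rule BCB_containing_H[OF S])
    with S BCB_lift_iff assms show ?thesis by blast
  next
    case False
    with S BCB_iff_delete show ?thesis by blast
  qed
next
  fix S assume "S \<in> BCB k \<sigma> UNIV (A - {H}) \<union> {map lift Ks @ [H] | Ks. Ks \<in> BCB (k - 1) \<tau> H restr}"
  then show "S \<in> BCB k \<sigma> UNIV A"
  proof
    assume S: "S \<in> BCB k \<sigma> UNIV (A - {H})"
    then have "H \<notin> set S" using set_BCB_subset by blast
    with S BCB_iff_delete show ?thesis by blast
  next
    assume "S \<in> {map lift Ks @ [H] | Ks. Ks \<in> BCB (k - 1) \<tau> H restr}"
    then obtain Ks where S: "S = map lift Ks @ [H]" and Ks: "Ks \<in> BCB (k - 1) \<tau> H restr" by blast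
    have "set Ks \<subseteq> restr" using Ks by (rule set_BCB_subset)
    with S Ks BCB_lift_iff assms show ?thesis by blast
  qed
qed

end

theorem mainTheorem5:
  fixes A :: "(complex^'n) set set" and H :: "(complex^'n) set"
    and \<sigma> :: "(complex^'n) set \<Rightarrow> nat" and k :: nat
  assumes "is_arrangement UNIV A"
    and "H \<in> A"
    and "is_ordering \<sigma> A"
    and "compatible \<sigma> A H"
    and "k \<ge> 1"
  shows "BCB k \<sigma> UNIV A =
           BCB k \<sigma> UNIV (A - {H}) \<union>
           {map (lift_min \<sigma> A H) Ks @ [H] | Ks. Ks \<in> BCB (k - 1) (induced_ord \<sigma> A H) H (restr_arr A H)}"
proof -
  have inj: "inj_on \<sigma> A" and range: "\<sigma> ` A \<subseteq> {1..card A}"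
    using assms(3) unfolding is_ordering_def by (auto simp: bij_betw_def)
  have "\<sigma> G < \<sigma> H" if "G \<in> A" "G \<noteq> H" for G
  proof -
    have "\<sigma> G \<le> \<sigma> H" using range that(1) assms(4) by (auto simp: compatible_def)
    moreover have "\<sigma> G \<noteq> \<sigma> H" using inj that assms(2) by (meson inj_on_eq_iff)
    ultimately show ?thesis by simp
  qed
  then interpret last_hyperplane A H \<sigma>
    using assms(1,2) inj by unfold_locales (simp_all add: is_arrangement_def)
  show ?thesis by (rule BCB_decomposition[OF assms(5)])
qed

end
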